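(* Let $D$ be a directed acyclic graph with exactly one source $\rho$, and let $e$ be the eccentricity of $\rho$. Then for every $i\in\{1,\ldots,e\}$ there is a node of $D$ with eccentricity $i$.
   Context: The eccentricity of a node $v$ of a digraph is the maximum, over all nodes $w$ reachable from $v$ by a directed path, of the directed distance from $v$ to $w$ (only reachable nodes are considered, so it is always finite). *)

theory Defs
  imports Main
begin

text \<open>Directed walks of length n from v to w are
  exactly the pairs (v,w) in E^^n; a shortest walk is a directed path.\<close>

definition digraph :: "'a set \<Rightarrow> ('a \<times> 'a) set \<Rightarrow> bool" where
  "digraph V E \<longleftrightarrow> finite V \<and> E \<subseteq> V \<times> V"

definition dag :: "'a set \<Rightarrow> ('a \<times> 'a) set \<Rightarrow> bool" where
  "dag V E \<longleftrightarrow> digraph V E \<and> acyclic E"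

definition is_source :: "'a set \<Rightarrow> ('a \<times> 'a) set \<Rightarrow> 'a \<Rightarrow> bool" where
  "is_source V E v \<longleftrightarrow> v \<in> V \<and> (\<forall>u. (u, v) \<notin> E)"

text \<open>Directed distance: length of a shortest directed path (only used for reachable w).\<close>
definition ddist :: "('a \<times> 'a) set \<Rightarrow> 'a \<Rightarrow> 'a \<Rightarrow> nat" where
  "ddist E v w = (LEAST n. (v, w) \<in> E ^^ n)"

definition ecc :: "('a \<times> 'a) set \<Rightarrow> 'a \<Rightarrow> nat" where
  "ecc E v = Max {ddist E v w | w. (v, w) \<in> E\<^sup>*}"

end

theory Submission
  imports Defs
begin

text \<open>Stepping from a node u with positive eccentricity to the first node of a
  shortest path realising it lowers the eccentricity by at most one. In a finite
  acyclic digraph, repeating such steps from \<rho> must end in a sink, whose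
  eccentricity is 0; so on the way every value between ecc E \<rho> and 0 occurs.\<close>

lemma ddist_in_relpow:
  assumes "(v, w) \<in> E\<^sup>*"
  shows "(v, w) \<in> E ^^ ddist E v w"
proof -
  obtain n where "(v, w) \<in> E ^^ n" using assms rtrancl_power by blast
  then show ?thesis unfolding ddist_def by (rule LeastI)
qed

lemma ddist_le:
  assumes "(v, w) \<in> E ^^ n"
  shows "ddist E v w \<le> n"
  unfolding ddist_def using assms by (rule Least_le)

lemma ddist_le_Suc_ddist:
  assumes "(u, v) \<in> E" and "(v, w) \<in> E\<^sup>*"
  shows "ddist E u w \<le> Suc (ddist E v w)"
  using relpow_Suc_I2[OF assms(1) ddist_in_relpow[OF assms(2)]] by (rule ddist_le)

lemma finite_reachable:
  assumes "finite V" and "E \<subseteq> V \<times> V"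
  shows "finite (E\<^sup>* `` {v})"
proof -
  have "E\<^sup>* `` {v} \<subseteq> insert v V"
    using trancl_subset_Sigma[OF assms(2)] by (auto simp: rtrancl_eq_or_trancl)
  then show ?thesis using assms(1) finite_subset by blast
qed

lemma ecc_eq_Max_ddist:
  "ecc E v = Max (ddist E v ` (E\<^sup>* `` {v}))"
proof -
  have "{ddist E v w | w. (v, w) \<in> E\<^sup>*} = ddist E v ` (E\<^sup>* `` {v})" by auto
  then show ?thesis unfolding ecc_def by simp
qed

lemma ddist_le_ecc:
  assumes "finite V" and "E \<subseteq> V \<times> V" and "(v, w) \<in> E\<^sup>*"
  shows "ddist E v w \<le> ecc E v"
  unfolding ecc_eq_Max_ddist using finite_reachable[OF assms(1,2)] assms(3) by auto

lemma ecc_attained: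
  assumes "finite V" and "E \<subseteq> V \<times> V"
  obtains w where "(v, w) \<in> E\<^sup>*" and "ddist E v w = ecc E v"
proof -
  have "ecc E v \<in> ddist E v ` (E\<^sup>* `` {v})"
    unfolding ecc_eq_Max_ddist using finite_reachable[OF assms] by (intro Max_in) auto
  then show ?thesis using that by auto
qed

lemma ecc_le_Suc_ecc_successor:
  assumes "finite V" and "E \<subseteq> V \<times> V" and "0 < ecc E u"
  obtains v where "(u, v) \<in> E" and "ecc E u \<le> Suc (ecc E v)"
proof -
  obtain w where uw: "(u, w) \<in> E\<^sup>*" and far: "ddist E u w = ecc E u"
    using ecc_attained[OF assms(1,2)] .
  have "(u, w) \<in> E ^^ Suc (ecc E u - 1)"
    using ddist_in_relpow[OF uw] far assms(3) by simp
  then obtain v where uv: "(u, v) \<in> E" and "(v, w) \<in> E ^^ (ecc E u - 1)"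
    using relpow_Suc_D2 by metis
  then have vw: "(v, w) \<in> E\<^sup>*" using relpow_imp_rtrancl by blast
  have "ecc E u \<le> Suc (ddist E v w)"
    using ddist_le_Suc_ddist[OF uv vw] far by simp
  also have "\<dots> \<le> Suc (ecc E v)"
    using ddist_le_ecc[OF assms(1,2) vw] by simp
  finally show ?thesis using that uv by blast
qed

lemma ecc_intermediate_values:
  assumes "finite V" and "E \<subseteq> V \<times> V" and "acyclic E" and "i \<le> ecc E u"
  shows "\<exists>v. (u, v) \<in> E\<^sup>* \<and> ecc E v = i"
proof -
  have "finite E" using finite_subset[OF assms(2)] assms(1) by simp
  then have "wf (E\<inverse>)" using finite_acyclic_wf_converse assms(3) by blast
  then show ?thesis using assms(4)
  proof (induction u rule: wf_induct_rule)
    case (less u)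
    show ?case
    proof (cases "ecc E u = i")
      case False
      then have "0 < ecc E u" using less.prems by simp
      then obtain v where uv: "(u, v) \<in> E" and "ecc E u \<le> Suc (ecc E v)"
        using ecc_le_Suc_ecc_successor[OF assms(1,2)] by blast
      then have "i \<le> ecc E v" using less.prems False by simp
      then obtain w where "(v, w) \<in> E\<^sup>*" and "ecc E w = i" using less.IH uv by blast
      then show ?thesis using converse_rtrancl_into_rtrancl[OF uv] by blast
    qed auto
  qed
qed

lemma reachable_in_nodes:
  assumes "E \<subseteq> V \<times> V" and "u \<in> V" and "(u, v) \<in> E\<^sup>*"
  shows "v \<in> V"
  using assms(3,1,2) by (induction rule: rtrancl_induct) auto

theorem mainTheorem4:
  fixes V :: "'a set" and E :: "('a \<times> 'a) set" and \<rho> :: 'a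
  assumes "dag V E"
    and "is_source V E \<rho>"
    and "\<forall>v. is_source V E v \<longrightarrow> v = \<rho>"
  shows "\<forall>i \<in> {1..ecc E \<rho>}. \<exists>v \<in> V. ecc E v = i"
proof
  fix i assume "i \<in> {1..ecc E \<rho>}"
  then have "i \<le> ecc E \<rho>" by simp
  have "finite V" and EV: "E \<subseteq> V \<times> V" and "acyclic E"
    using assms(1) unfolding dag_def digraph_def by auto
  have "\<rho> \<in> V" using assms(2) unfolding is_source_def by simp
  obtain v where "(\<rho>, v) \<in> E\<^sup>*" and "ecc E v = i"
    using ecc_intermediate_values[OF \<open>finite V\<close> EV \<open>acyclic E\<close> \<open>i \<le> ecc E \<rho>\<close>] by blast
  then show "\<exists>v \<in> V. ecc E v = i" using reachable_in_nodes[OF EV \<open>\<rho> \<in> V\<close>] by blast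
qed

end
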